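(* Let $T_1=\{12|3456,\,123|456,\,1234|56\}$, $T_2=\{13|2456,\,123|456,\,1235|46\}$, $T_3=\{13|2456,\,123|456,\,1234|56\}$, $T_4=\{12|3456,\,123|456,\,1235|46\}$ be binary trees on leaves $\{1,\dots,6\}$, and let $f=q_{GGGGGG}+q_{GTTTTG}-q_{GTGGTG}-q_{GGTTGG}$. Then for the JC model and for the K2P model, $f\in\mathcal{I}(V_{T_1}\ast V_{T_2})\setminus\mathcal{I}(V_{T_i})$ for $i\in\{3,4\}$. In particular $V_{T_i}\not\subseteq V_{T_1}\ast V_{T_2}$ for $i\in\{3,4\}$.
   Context: Trees are unrooted binary trees described by their nontrivial splits; $\Sigma(T)$ is the set of all splits of $T$ including trivial ones $\{i\}|[6]\setminus\{i\}$. With $G=\mathbb{Z}_2\times\mathbb{Z}_2$ and $A=(0,0)$, $C=(0,1)$, $G=(1,0)$, $T=(1,1)$, the K3P model on $T$ in Fourier coordinates $q_{g_1\cdots g_6}$ is $q_{g_1\cdots g_6}=\prod_{A|B\in\Sigma(T)}a^{A|B}_{\sum_{i\in A}g_i}$ if $\sum g_i=0$ and $0$ otherwise; K2P imposes $a^e_G=a^e_T$, JC imposes $a^e_C=a^e_G=a^e_T$ for all splits $e$. $V_T$ is the Zariski closure in $\mathbb{P}^{4^6-1}$ of the image for complex parameters; $V\ast W$ is the join (closure of the union of lines meeting $V$ and $W$); $\mathcal{I}(V)$ is the ideal of polynomials vanishing on $V$. *)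

theory Defs
  imports Complex_Main "HOL-Library.Z2" "HOL-Library.Product_Plus"
begin

type_synonym grp = "bit \<times> bit"

definition nA :: grp where "nA = (0, 0)"
definition nC :: grp where "nC = (0, 1)"
definition nG :: grp where "nG = (1, 0)"
definition nT :: grp where "nT = (1, 1)"

text \<open>Leaves are 1..6. A Fourier index g_1...g_6 is a list w of length 6,
  with g_i = w ! (i - 1). Points of C^(4^6) are functions from indices to complex
  numbers (values at lists of length other than 6 are irrelevant).\<close>
definition leaves :: "nat set" where "leaves = {1..6}"

type_synonym word = "grp list"
type_synonym point = "word \<Rightarrow> complex"

definition gsum :: "word \<Rightarrow> nat set \<Rightarrow> grp" where
  "gsum w A = (\<Sum>i\<in>A. w ! (i - 1))"

text \<open>A tree is given by its set of nontrivial splits, each split A|B recorded by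
  the side A. Sigma(T) adds the trivial splits {i}|[6]-{i}.\<close>
definition Sigma_splits :: "nat set set \<Rightarrow> nat set set" where
  "Sigma_splits T = T \<union> {{i} | i. i \<in> leaves}"

datatype model = JC | K2P | K3P

definition params_ok :: "model \<Rightarrow> (nat set \<Rightarrow> grp \<Rightarrow> complex) \<Rightarrow> bool" where
  "params_ok M a = (case M of
      K3P \<Rightarrow> True
    | K2P \<Rightarrow> (\<forall>e. a e nG = a e nT)
    | JC \<Rightarrow> (\<forall>e. a e nC = a e nG \<and> a e nG = a e nT))"

definition qmap :: "nat set set \<Rightarrow> (nat set \<Rightarrow> grp \<Rightarrow> complex) \<Rightarrow> point" where
  "qmap T a = (\<lambda>w. if length w = 6 \<and> gsum w leaves = 0
                     then (\<Prod>A\<in>Sigma_splits T. a A (gsum w A)) else 0)"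

definition param_image :: "model \<Rightarrow> nat set set \<Rightarrow> point set" where
  "param_image M T = {qmap T a | a. params_ok M a}"

inductive_set polyfun :: "(point \<Rightarrow> complex) set" where
  pf_const: "(\<lambda>x. c) \<in> polyfun"
| pf_var: "length w = 6 \<Longrightarrow> (\<lambda>x. x w) \<in> polyfun"
| pf_add: "p \<in> polyfun \<Longrightarrow> r \<in> polyfun \<Longrightarrow> (\<lambda>x. p x + r x) \<in> polyfun"
| pf_mult: "p \<in> polyfun \<Longrightarrow> r \<in> polyfun \<Longrightarrow> (\<lambda>x. p x * r x) \<in> polyfun"

definition vanish_ideal :: "point set \<Rightarrow> (point \<Rightarrow> complex) set" where
  "vanish_ideal S = {p \<in> polyfun. \<forall>x\<in>S. p x = 0}"

definition zcl :: "point set \<Rightarrow> point set" where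
  "zcl S = {x. \<forall>p\<in>vanish_ideal S. p x = 0}"

text \<open>Projective varieties are represented by their affine cones.
  V_T: affine cone = Zariski closure of the (conical) parametrization image.\<close>
definition V :: "model \<Rightarrow> nat set set \<Rightarrow> point set" where
  "V M T = zcl (param_image M T)"

text \<open>Join: affine cone over the closure of the union of lines joining V and W.\<close>
definition join :: "point set \<Rightarrow> point set \<Rightarrow> point set" where
  "join S1 S2 = zcl {(\<lambda>w. x w + y w) | x y. x \<in> S1 \<and> y \<in> S2}"

definition T1 :: "nat set set" where "T1 = {{1,2}, {1,2,3}, {1,2,3,4}}"
definition T2 :: "nat set set" where "T2 = {{1,3}, {1,2,3}, {1,2,3,5}}"
definition T3 :: "nat set set" where "T3 = {{1,3}, {1,2,3}, {1,2,3,4}}"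
definition T4 :: "nat set set" where "T4 = {{1,2}, {1,2,3}, {1,2,3,5}}"

definition fpoly :: "point \<Rightarrow> complex" where
  "fpoly x = x [nG,nG,nG,nG,nG,nG] + x [nG,nT,nT,nT,nT,nG]
             - x [nG,nT,nG,nG,nT,nG] - x [nG,nG,nT,nT,nG,nG]"

end

theory Submission
  imports Defs
begin

text \<open>Under the K2P constraint a^e_G = a^e_T the coordinate q_w only sees, on each split, whether
  the sum lies in A, C or in {G, T}. For T1 and T2 the four monomials of f then cancel in pairs.
  For T3, f restricts to (a^e_A - a^e_C)(a^{e'}_A - a^{e'}_C) times a monomial, with
  e = 13|2456 and e' = 1234|56 (for T4: e = 12|3456, e' = 1235|46); this is nonzero for generic
  JC parameters. Since f is linear, it vanishes on the join once it vanishes on both factors.\<close>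

lemma subset_zcl: "S \<subseteq> zcl S"
  unfolding zcl_def vanish_ideal_def by auto

lemma vanish_ideal_antimono: "S \<subseteq> S' \<Longrightarrow> vanish_ideal S' \<subseteq> vanish_ideal S"
  unfolding vanish_ideal_def by auto

lemma vanish_ideal_zcl [simp]: "vanish_ideal (zcl S) = vanish_ideal S"
proof
  show "vanish_ideal (zcl S) \<subseteq> vanish_ideal S"
    by (rule vanish_ideal_antimono[OF subset_zcl])
  show "vanish_ideal S \<subseteq> vanish_ideal (zcl S)"
    unfolding vanish_ideal_def zcl_def by auto
qed

lemma vanish_ideal_V_iff:
  "p \<in> vanish_ideal (V M T) \<longleftrightarrow> p \<in> polyfun \<and> (\<forall>a. params_ok M a \<longrightarrow> p (qmap T a) = 0)"
  unfolding V_def vanish_ideal_zcl by (auto simp: vanish_ideal_def param_image_def)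

lemma additive_in_vanish_ideal_join:
  assumes "p \<in> vanish_ideal S1" "p \<in> vanish_ideal S2"
    and additive: "\<And>x y. p (\<lambda>w. x w + y w) = p x + p y"
  shows "p \<in> vanish_ideal (join S1 S2)"
  using assms unfolding join_def vanish_ideal_zcl by (auto simp: vanish_ideal_def)

lemma fpoly_polyfun: "fpoly \<in> polyfun"
proof -
  have var: "(\<lambda>x. x w) \<in> polyfun" if "length w = 6" for w
    using that by (rule pf_var)
  have neg: "(\<lambda>x. (-1) * x w) \<in> polyfun" if "length w = 6" for w
    using pf_const var[OF that] by (rule pf_mult)
  have "fpoly = (\<lambda>x. x [nG,nG,nG,nG,nG,nG] + x [nG,nT,nT,nT,nT,nG]
                     + (-1) * x [nG,nT,nG,nG,nT,nG] + (-1) * x [nG,nG,nT,nT,nG,nG])"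
    by (simp add: fpoly_def fun_eq_iff)
  also have "\<dots> \<in> polyfun"
    by (intro pf_add var neg) simp_all
  finally show ?thesis .
qed

lemma fpoly_add: "fpoly (\<lambda>w. x w + y w) = fpoly x + fpoly y"
  by (simp add: fpoly_def)

lemma leaves_eq: "leaves = {1, 2, 3, 4, 5, 6}"
  unfolding leaves_def by auto

lemma prod_Sigma_splits_three:
  assumes T: "T = {s1, s2, s3}"
    and card: "2 \<le> card s1" "card s1 < card s2" "card s2 < card s3"
  shows "(\<Prod>A\<in>Sigma_splits T. f A) = f s1 * f s2 * f s3 * (\<Prod>i\<in>leaves. f {i})"
proof -
  have split: "Sigma_splits T = T \<union> (\<lambda>i. {i}) ` leaves"
    unfolding Sigma_splits_def by auto
  have "T \<inter> (\<lambda>i. {i}) ` leaves = {}"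
    using card by (auto simp: T)
  then have "(\<Prod>A\<in>Sigma_splits T. f A) = (\<Prod>A\<in>T. f A) * (\<Prod>A\<in>(\<lambda>i. {i}) ` leaves. f A)"
    unfolding split by (intro prod.union_disjoint) (auto simp: T leaves_def)
  also have "(\<Prod>A\<in>(\<lambda>i. {i}) ` leaves. f A) = (\<Prod>i\<in>leaves. f {i})"
    by (simp add: prod.reindex)
  moreover have "s1 \<noteq> s2" "s1 \<noteq> s3" "s2 \<noteq> s3"
    using card by auto
  ultimately show ?thesis
    by (simp add: T mult.assoc)
qed

lemma prod_Sigma_splits_trees:
  "(\<Prod>A\<in>Sigma_splits T1. f A) = f {1,2} * f {1,2,3} * f {1,2,3,4} * (\<Prod>i\<in>leaves. f {i})"
  "(\<Prod>A\<in>Sigma_splits T2. f A) = f {1,3} * f {1,2,3} * f {1,2,3,5} * (\<Prod>i\<in>leaves. f {i})"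
  "(\<Prod>A\<in>Sigma_splits T3. f A) = f {1,3} * f {1,2,3} * f {1,2,3,4} * (\<Prod>i\<in>leaves. f {i})"
  "(\<Prod>A\<in>Sigma_splits T4. f A) = f {1,2} * f {1,2,3} * f {1,2,3,5} * (\<Prod>i\<in>leaves. f {i})"
  by (rule prod_Sigma_splits_three; simp add: T1_def T2_def T3_def T4_def)+

lemma grp_add_table:
  "nA = 0" "nG + nG = 0" "nT + nT = 0" "nC + nC = 0"
  "nG + nT = nC" "nT + nG = nC" "nC + nG = nT" "nG + nC = nT" "nC + nT = nG" "nT + nC = nG"
  by (simp_all add: nA_def nC_def nG_def nT_def zero_prod_def)

lemma grp_nonzero: "nC \<noteq> 0" "nG \<noteq> 0" "nT \<noteq> 0"
  by (simp_all add: nC_def nG_def nT_def zero_prod_def)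

lemma gsum_word6:
  "gsum [x1, x2, x3, x4, x5, x6] A = (\<Sum>i\<in>A. [x1, x2, x3, x4, x5, x6] ! (i - 1))"
  by (simp add: gsum_def)

lemmas fpoly_qmap_simps =
  fpoly_def qmap_def prod_Sigma_splits_trees gsum_word6 leaves_eq grp_add_table grp_nonzero add.assoc[symmetric]

lemma K2P_params: "params_ok K2P a \<Longrightarrow> a e nT = a e nG"
  by (simp add: params_ok_def)

lemma params_ok_K2P_if_JC_or_K2P: "M \<in> {JC, K2P} \<Longrightarrow> params_ok M a \<Longrightarrow> params_ok K2P a"
  by (auto simp: params_ok_def)

lemma fpoly_qmap_T1:
  assumes "params_ok K2P a" shows "fpoly (qmap T1 a) = 0"
  using K2P_params[OF assms]
  by (simp add: fpoly_qmap_simps)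

lemma fpoly_qmap_T2:
  assumes "params_ok K2P a" shows "fpoly (qmap T2 a) = 0"
  using K2P_params[OF assms]
  by (simp add: fpoly_qmap_simps)

lemma fpoly_qmap_T3:
  assumes "params_ok K2P a"
  shows "fpoly (qmap T3 a) = (a {1,3} 0 - a {1,3} nC) * (a {1,2,3,4} 0 - a {1,2,3,4} nC)
           * a {1,2,3} nG * (\<Prod>i\<in>leaves. a {i} nG)"
  using K2P_params[OF assms]
  by (simp add: fpoly_qmap_simps) (simp add: ring_distribs)

lemma fpoly_qmap_T4:
  assumes "params_ok K2P a"
  shows "fpoly (qmap T4 a) = (a {1,2} 0 - a {1,2} nC) * (a {1,2,3,5} 0 - a {1,2,3,5} nC)
           * a {1,2,3} nG * (\<Prod>i\<in>leaves. a {i} nG)"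
  using K2P_params[OF assms]
  by (simp add: fpoly_qmap_simps) (simp add: ring_distribs)

lemma fpoly_in_vanish_ideal_T1_T2:
  assumes "M \<in> {JC, K2P}" "T \<in> {T1, T2}"
  shows "fpoly \<in> vanish_ideal (V M T)"
  using assms fpoly_polyfun fpoly_qmap_T1 fpoly_qmap_T2 params_ok_K2P_if_JC_or_K2P
  by (auto simp: vanish_ideal_V_iff)

definition generic_params :: "nat set \<Rightarrow> grp \<Rightarrow> complex" where
  "generic_params e g = (if g = 0 then 2 else 1)"

lemma params_ok_generic_params: "params_ok M generic_params"
  by (cases M) (auto simp: params_ok_def generic_params_def grp_nonzero)

lemma fpoly_notin_vanish_ideal_T3_T4:
  assumes "T \<in> {T3, T4}"
  shows "fpoly \<notin> vanish_ideal (V M T)"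
proof -
  have "fpoly (qmap T generic_params) = 1"
    using assms fpoly_qmap_T3 fpoly_qmap_T4 params_ok_generic_params
    by (auto simp: generic_params_def grp_nonzero)
  then show ?thesis
    using params_ok_generic_params[of M] by (force simp: vanish_ideal_V_iff)
qed

theorem lemma5:
  shows "\<forall>M \<in> {JC, K2P}.
           fpoly \<in> vanish_ideal (join (V M T1) (V M T2)) \<and>
           (\<forall>Ti \<in> {T3, T4}. fpoly \<notin> vanish_ideal (V M Ti) \<and>
                             \<not> (V M Ti \<subseteq> join (V M T1) (V M T2)))"
proof (intro ballI conjI)
  fix M assume M: "M \<in> {JC, K2P}"
  show in_join: "fpoly \<in> vanish_ideal (join (V M T1) (V M T2))"
    using M by (intro additive_in_vanish_ideal_join fpoly_in_vanish_ideal_T1_T2 fpoly_add) auto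
  fix Ti assume Ti: "Ti \<in> {T3, T4}"
  show notin_Ti: "fpoly \<notin> vanish_ideal (V M Ti)"
    using Ti by (rule fpoly_notin_vanish_ideal_T3_T4)
  show "\<not> V M Ti \<subseteq> join (V M T1) (V M T2)"
    using vanish_ideal_antimono in_join notin_Ti by blast
qed

end
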